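(* Let $s_2=s_2(z)$ be the formal power series \[ s_2=\frac{1+z-z^{2}-\sqrt{1-2z-z^{2}-2z^{3}+z^{4}}}{2z}, \] where the square root is the power series with constant term $1$ (so $s_2=1+z^2+z^3+2z^4+\cdots$). For $k\ge 0$ let $f_k(z)$ and $g_k(z)$ be the generating functions (in the variable $z$ marking the number of steps) of partial Dyck paths with air pockets ending at level $k$ whose last step is an up-step or that are empty (for $f_k$), respectively whose last step is a down-step (for $g_k$). Then for all $k\ge 0$, \[ f_k=z^{k}s_2^{k},\qquad g_k=z^k\bigl(s_2^{k+1}-s_2^{k}\bigr). \] In particular, $f_k+g_k=z^ks_2^{k+1}$ is the generating function of partial Dyck paths with air pockets ending at level $k$.
   Context: A partial Dyck path with air pockets is a lattice path starting at $(0,0)$, using up-steps $(1,1)$ and down-steps $(1,-j)$ for any integer $j\ge1$, never going below the $x$-axis, such that no two down-steps are consecutive; it may end at any level $k\ge0$ (the height of its endpoint). Equivalently, $f_k,g_k$ are the unique formal power series in $z$ satisfying $f_0=1$, $f_k=zf_{k-1}+zg_{k-1}$ for $k\ge1$, and $g_k=z\sum_{j>k}f_j$ for $k\ge0$. *)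

theory Defs
  imports "HOL-Computational_Algebra.Formal_Power_Series"
begin

text \<open>A path is encoded as the list of its vertical increments: an up-step (1,1) is 1,
  a down-step (1,-j) with j \<ge> 1 is the negative integer -j.\<close>

definition air_path :: "int list \<Rightarrow> bool" where
  "air_path p \<longleftrightarrow>
     (\<forall>x \<in> set p. x = 1 \<or> x \<le> -1) \<and>
     (\<forall>i \<le> length p. sum_list (take i p) \<ge> 0) \<and>
     (\<forall>i. Suc i < length p \<longrightarrow> \<not> (p ! i < 0 \<and> p ! Suc i < 0))"

definition f_gf :: "nat \<Rightarrow> real fps" where
  "f_gf k = Abs_fps (\<lambda>n. of_nat (card {p. air_path p \<and> length p = n \<and> sum_list p = int k
                                        \<and> (p = [] \<or> last p = 1)}))"

definition g_gf :: "nat \<Rightarrow> real fps" where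
  "g_gf k = Abs_fps (\<lambda>n. of_nat (card {p. air_path p \<and> length p = n \<and> sum_list p = int k
                                        \<and> p \<noteq> [] \<and> last p < 0}))"

definition all_gf :: "nat \<Rightarrow> real fps" where
  "all_gf k = Abs_fps (\<lambda>n. of_nat (card {p. air_path p \<and> length p = n \<and> sum_list p = int k}))"

definition disc :: "real fps" where
  "disc = 1 - 2 * fps_X - fps_X ^ 2 - 2 * fps_X ^ 3 + fps_X ^ 4"

definition sqrt_disc :: "real fps" where
  "sqrt_disc = (THE Q. fps_nth Q 0 = 1 \<and> Q ^ 2 = disc)"

definition s2 :: "real fps" where
  "s2 = (1 + fps_X - fps_X ^ 2 - sqrt_disc) / (2 * fps_X)"

end

theory Submission
  imports Defs
begin

text \<open>Removing the last step of a path yields recurrences for the coefficients. A path ending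
  at level \<open>k + 1\<close> with an up-step is any path ending at level \<open>k\<close> followed by an up-step, so
  \<open>f (k + 1) = z (f k + g k)\<close>, and \<open>f 0 = 1\<close>. Since down-steps are never consecutive, a path
  ending at level \<open>k\<close> with a down-step is a path ending at some level \<open>j > k\<close> with an up-step,
  followed by a down-step of size \<open>j - k\<close>, so \<open>g k = z (\<Sum>j>k. f j)\<close>. The closed forms satisfy the first one
  trivially; as \<open>s\<^sub>2\<close> is a root of \<open>z s\<^sup>2 - (1 + z - z\<^sup>2) s + 1\<close>, they satisfy
  \<open>g k - g (k + 1) = z f (k + 1)\<close>, which telescopes to the second one because \<open>z\<^sup>N\<close> divides \<open>g N\<close>.\<close>

unbundle fps_syntax

lemma successively_iff_nth:
  "successively R xs \<longleftrightarrow> (\<forall>i. Suc i < length xs \<longrightarrow> R (xs ! i) (xs ! Suc i))"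
proof (induction R xs rule: successively.induct)
  case (3 R x y xs)
  then show ?case
    by (simp only: successively.simps length_Cons Suc_less_eq All_less_Suc2 nth_Cons_0 nth_Cons_Suc)
qed auto

lemma all_take_snoc_iff:
  "(\<forall>i \<le> length (xs @ [x]). P (take i (xs @ [x]))) \<longleftrightarrow>
   (\<forall>i \<le> length xs. P (take i xs)) \<and> P (xs @ [x])"
  by (auto simp: le_Suc_eq)

lemma air_path_iff:
  "air_path p \<longleftrightarrow>
     (\<forall>x \<in> set p. x = 1 \<or> x \<le> -1) \<and>
     (\<forall>i \<le> length p. sum_list (take i p) \<ge> 0) \<and>
     successively (\<lambda>x y. \<not> (x < 0 \<and> y < 0)) p"
  unfolding air_path_def successively_iff_nth ..

lemma air_path_snoc:
  "air_path (p @ [x]) \<longleftrightarrow>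
     air_path p \<and> (x = 1 \<or> x \<le> -1) \<and> 0 \<le> sum_list p + x \<and> \<not> (p \<noteq> [] \<and> last p < 0 \<and> x < 0)"
  unfolding air_path_iff all_take_snoc_iff[where P = "\<lambda>q. 0 \<le> sum_list q"] successively_append_iff
  by (auto simp: ac_simps)

lemma air_path_Nil [simp]: "air_path []"
  by (simp add: air_path_def)

lemma air_path_sum_nonneg: "air_path p \<Longrightarrow> 0 \<le> sum_list p"
  unfolding air_path_def by (metis order_refl take_all)

lemma air_path_step: "air_path p \<Longrightarrow> x \<in> set p \<Longrightarrow> x = 1 \<or> x \<le> -1"
  unfolding air_path_def by blast

lemma air_path_last: "air_path p \<Longrightarrow> p \<noteq> [] \<Longrightarrow> last p = 1 \<or> last p \<le> -1"
  using air_path_step last_in_set by blast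

lemma air_path_sum_le_length:
  assumes "air_path p" shows "sum_list p \<le> int (length p)"
proof -
  have "\<forall>x\<in>set p. x \<le> (1::int)" using air_path_step[OF assms] by force
  then show ?thesis by (induction p) auto
qed

lemma finite_air_paths_length: "finite {p. air_path p \<and> length p = n}"
proof (induction n)
  case 0
  then show ?case by simp
next
  case (Suc n)
  have "{p. air_path p \<and> length p = Suc n} \<subseteq>
        (\<lambda>(p, x). p @ [x]) ` ({p. air_path p \<and> length p = n} \<times> {- int n..1})"
  proof
    fix q assume q: "q \<in> {p. air_path p \<and> length p = Suc n}"
    then obtain p x where q_eq: "q = p @ [x]" by (cases q rule: rev_exhaust) auto
    with q have "air_path (p @ [x])" "length p = n" by auto
    then have "air_path p" "- int n \<le> x" "x \<le> 1"
      using air_path_sum_le_length[of p] by (auto simp: air_path_snoc)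
    with q_eq \<open>length p = n\<close>
    show "q \<in> (\<lambda>(p, x). p @ [x]) ` ({p. air_path p \<and> length p = n} \<times> {- int n..1})"
      by force
  qed
  then show ?case
    by (rule finite_subset) (intro finite_imageI finite_cartesian_product Suc.IH finite_atLeastAtMost_int)
qed

definition air_paths_up :: "nat \<Rightarrow> nat \<Rightarrow> int list set" where
  "air_paths_up k n = {p. air_path p \<and> length p = n \<and> sum_list p = int k \<and> (p = [] \<or> last p = 1)}"

definition air_paths_down :: "nat \<Rightarrow> nat \<Rightarrow> int list set" where
  "air_paths_down k n = {p. air_path p \<and> length p = n \<and> sum_list p = int k \<and> p \<noteq> [] \<and> last p < 0}"

definition air_paths_at :: "nat \<Rightarrow> nat \<Rightarrow> int list set" where
  "air_paths_at k n = {p. air_path p \<and> length p = n \<and> sum_list p = int k}"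

lemma fps_nth_f_gf: "f_gf k $ n = card (air_paths_up k n)"
  by (simp add: f_gf_def air_paths_up_def)

lemma fps_nth_g_gf: "g_gf k $ n = card (air_paths_down k n)"
  by (simp add: g_gf_def air_paths_down_def)

lemma fps_nth_all_gf: "all_gf k $ n = card (air_paths_at k n)"
  by (simp add: all_gf_def air_paths_at_def)

lemma finite_air_paths_up: "finite (air_paths_up k n)"
  by (rule finite_subset[OF _ finite_air_paths_length[of n]]) (auto simp: air_paths_up_def)

lemma finite_air_paths_down: "finite (air_paths_down k n)"
  by (rule finite_subset[OF _ finite_air_paths_length[of n]]) (auto simp: air_paths_down_def)

lemma card_air_paths_at: "card (air_paths_at k n) = card (air_paths_up k n) + card (air_paths_down k n)"
proof -
  have "air_paths_at k n = air_paths_up k n \<union> air_paths_down k n"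
    by (auto simp: air_paths_at_def air_paths_up_def air_paths_down_def dest: air_path_last)
  moreover have "air_paths_up k n \<inter> air_paths_down k n = {}"
    by (auto simp: air_paths_up_def air_paths_down_def)
  ultimately show ?thesis
    by (simp add: card_Un_disjoint finite_air_paths_up finite_air_paths_down)
qed

lemma air_paths_up_0: "air_paths_up 0 n = (if n = 0 then {[]} else {})"
proof -
  have "air_paths_up 0 n \<subseteq> {[]}"
  proof (rule subsetI, rule ccontr)
    fix q assume "q \<in> air_paths_up 0 n" "q \<notin> {[]}"
    then have "q \<noteq> []" by simp
    moreover from \<open>q \<in> air_paths_up 0 n\<close> have "air_path q" "sum_list q = 0" "q = [] \<or> last q = 1"
      by (simp_all add: air_paths_up_def)
    ultimately obtain p where "air_path (p @ [1])" "sum_list p + 1 = 0"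
      by (metis append_butlast_last_id sum_list_append sum_list.Cons sum_list.Nil add_0_right)
    then show False using air_path_sum_nonneg[of p] by (simp add: air_path_snoc)
  qed
  moreover have "[] \<in> air_paths_up 0 n \<longleftrightarrow> n = 0"
    by (simp add: air_paths_up_def)
  ultimately show ?thesis
    by (auto simp: subset_singleton_iff)
qed

lemma air_paths_up_Suc_Suc: "air_paths_up (Suc k) (Suc n) = (\<lambda>p. p @ [1]) ` air_paths_at k n"
proof (intro equalityI subsetI)
  fix q assume q: "q \<in> air_paths_up (Suc k) (Suc n)"
  then have "q \<noteq> []" "last q = 1" by (auto simp: air_paths_up_def)
  then have q_eq: "q = butlast q @ [1]" by (metis append_butlast_last_id)
  have "butlast q \<in> air_paths_at k n"
    using q by (subst (asm) q_eq) (simp add: air_paths_up_def air_paths_at_def air_path_snoc)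
  with q_eq show "q \<in> (\<lambda>p. p @ [1]) ` air_paths_at k n" by (rule image_eqI)
next
  fix q assume "q \<in> (\<lambda>p. p @ [1]) ` air_paths_at k n"
  then obtain p where "q = p @ [1]" "p \<in> air_paths_at k n" by blast
  then show "q \<in> air_paths_up (Suc k) (Suc n)"
    by (simp add: air_paths_up_def air_paths_at_def air_path_snoc air_path_sum_nonneg)
qed

lemma air_paths_down_Suc:
  assumes "n \<le> N"
  shows "air_paths_down k (Suc n) = (\<Union>j\<in>{k<..N}. (\<lambda>p. p @ [int k - int j]) ` air_paths_up j n)"
proof (intro equalityI subsetI)
  fix q assume q: "q \<in> air_paths_down k (Suc n)"
  then have "q \<noteq> []" by (simp add: air_paths_down_def)
  then obtain p d where q_eq: "q = p @ [d]" by (cases q rule: rev_exhaust) simp_all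
  with q have "air_path (p @ [d])" "length p = n" "sum_list p + d = int k" "d < 0"
    by (simp_all add: air_paths_down_def)
  then have "air_path p" "p \<noteq> [] \<Longrightarrow> \<not> last p < 0"
    by (simp_all add: air_path_snoc)
  then have p: "air_path p" "p = [] \<or> last p = 1"
    using air_path_last[of p] by force+
  define j where "j = nat (sum_list p)"
  have sum_p: "sum_list p = int j"
    using air_path_sum_nonneg[OF p(1)] by (simp add: j_def)
  have "j \<le> N"
    using air_path_sum_le_length[OF p(1)] \<open>length p = n\<close> sum_p assms by simp
  moreover have "k < j" using \<open>sum_list p + d = int k\<close> \<open>d < 0\<close> sum_p by simp
  moreover have "p \<in> air_paths_up j n"
    using p sum_p \<open>length p = n\<close> by (simp add: air_paths_up_def)
  moreover have "q = p @ [int k - int j]"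
    using q_eq \<open>sum_list p + d = int k\<close> sum_p by simp
  ultimately show "q \<in> (\<Union>j\<in>{k<..N}. (\<lambda>p. p @ [int k - int j]) ` air_paths_up j n)"
    by force
next
  fix q assume "q \<in> (\<Union>j\<in>{k<..N}. (\<lambda>p. p @ [int k - int j]) ` air_paths_up j n)"
  then obtain j p where "k < j" "p \<in> air_paths_up j n" "q = p @ [int k - int j]"
    by auto
  then show "q \<in> air_paths_down k (Suc n)"
    by (auto simp: air_paths_up_def air_paths_down_def air_path_snoc)
qed

lemma card_air_paths_up_Suc_Suc:
  "card (air_paths_up (Suc k) (Suc n)) = card (air_paths_up k n) + card (air_paths_down k n)"
proof -
  have "inj_on (\<lambda>p. p @ [1::int]) (air_paths_at k n)" by (rule inj_onI) simp
  then show ?thesis by (simp add: air_paths_up_Suc_Suc card_image card_air_paths_at)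
qed

lemma card_air_paths_down_Suc:
  assumes "n \<le> N"
  shows "card (air_paths_down k (Suc n)) = (\<Sum>j\<in>{k<..N}. card (air_paths_up j n))"
proof -
  have "card (air_paths_down k (Suc n)) =
        (\<Sum>j\<in>{k<..N}. card ((\<lambda>p. p @ [int k - int j]) ` air_paths_up j n))"
    unfolding air_paths_down_Suc[OF assms]
    by (rule card_UN_disjoint) (auto simp: finite_air_paths_up)
  also have "\<dots> = (\<Sum>j\<in>{k<..N}. card (air_paths_up j n))"
    by (intro sum.cong refl card_image inj_onI) simp
  finally show ?thesis .
qed

lemma fps_sqrt_unique:
  fixes A :: "'a::field_char_0 fps"
  assumes "A $ 0 = 1"
  shows "\<exists>!Q. Q $ 0 = 1 \<and> Q ^ 2 = A"
proof
  let ?R = "fps_radical (\<lambda>_ _. 1) 2 A"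
  show "?R $ 0 = 1 \<and> ?R ^ 2 = A"
    using power_radical[of A "\<lambda>_ _. 1" 1] assms by (simp add: numeral_2_eq_2)
  fix Q assume "Q $ 0 = 1 \<and> Q ^ 2 = A"
  then show "Q = ?R"
    using radical_unique[of "\<lambda>_ _. 1" 1 A Q] assms by (simp add: numeral_2_eq_2)
qed

lemma sqrt_disc: "sqrt_disc $ 0 = 1 \<and> sqrt_disc ^ 2 = disc"
  unfolding sqrt_disc_def by (rule theI', rule fps_sqrt_unique) (simp add: disc_def)

lemma s2_times_2X: "2 * fps_X * s2 = 1 + fps_X - fps_X ^ 2 - sqrt_disc"
proof -
  let ?N = "1 + fps_X - fps_X ^ 2 - sqrt_disc"
  have "subdegree (2 * fps_X :: real fps) = 1"
    by (rule subdegreeI) auto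
  moreover have "?N = 0 \<or> 1 \<le> subdegree ?N"
    using sqrt_disc by (auto intro: subdegree_geI)
  ultimately have "?N / (2 * fps_X) * (2 * fps_X) = ?N"
    using fps_times_divide_eq[of "2 * fps_X" ?N] by (auto simp: fps_X_neq_zero)
  then show ?thesis unfolding s2_def by (simp add: mult.commute)
qed

lemma s2_quadratic: "fps_X * s2 ^ 2 = (1 + fps_X - fps_X ^ 2) * s2 - 1"
proof -
  let ?P = "1 + fps_X - fps_X ^ 2 :: real fps"
  have "sqrt_disc = ?P - 2 * fps_X * s2"
    using s2_times_2X by simp
  moreover have "disc = ?P ^ 2 - 4 * fps_X"
    unfolding disc_def by algebra
  ultimately have "(?P - 2 * fps_X * s2) ^ 2 = ?P ^ 2 - 4 * fps_X"
    using sqrt_disc by simp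
  then have "4 * fps_X * (fps_X * s2 ^ 2 - (?P * s2 - 1)) = 0"
    by algebra
  then show ?thesis by (simp add: fps_X_neq_zero)
qed

definition f_closed :: "nat \<Rightarrow> real fps" where
  "f_closed k = fps_X ^ k * s2 ^ k"

definition g_closed :: "nat \<Rightarrow> real fps" where
  "g_closed k = fps_X ^ k * (s2 ^ (k + 1) - s2 ^ k)"

lemma f_closed_Suc: "f_closed (Suc k) = fps_X * (f_closed k + g_closed k)"
  by (simp add: f_closed_def g_closed_def algebra_simps)

lemma g_closed_diff: "g_closed k - g_closed (Suc k) = fps_X * f_closed (Suc k)"
proof -
  have "g_closed k - g_closed (Suc k) =
        fps_X ^ k * s2 ^ k * (s2 - 1 + fps_X * s2 - fps_X * s2 ^ 2)"
    unfolding g_closed_def by (simp add: algebra_simps power2_eq_square)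
  also have "s2 - 1 + fps_X * s2 - fps_X * s2 ^ 2 = fps_X ^ 2 * s2"
    using s2_quadratic by (simp add: algebra_simps)
  finally show ?thesis
    unfolding f_closed_def by (simp add: algebra_simps power2_eq_square)
qed

lemma g_closed_telescope:
  "k \<le> N \<Longrightarrow> g_closed k = g_closed N + fps_X * (\<Sum>j\<in>{k<..N}. f_closed j)"
proof (induction N rule: dec_induct)
  case (step N)
  have "{k<..Suc N} = insert (Suc N) {k<..N}" using step.hyps by auto
  then show ?case
    using step.IH g_closed_diff[of N] by (simp add: algebra_simps)
qed simp

lemma fps_nth_g_closed_0: "g_closed k $ 0 = 0"
  using g_closed_telescope[of k "Suc k"] by (simp add: g_closed_def)

lemma fps_nth_g_closed_Suc:
  assumes "Suc n < N"
  shows "g_closed k $ Suc n = (\<Sum>j\<in>{k<..N}. f_closed j $ n)"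
proof (cases "k \<le> N")
  case True
  have "g_closed N $ Suc n = 0"
    using assms by (simp add: g_closed_def fps_X_power_mult_nth)
  then show ?thesis
    using g_closed_telescope[OF True] by (simp add: fps_sum_nth)
next
  case False
  then show ?thesis
    using assms by (simp add: g_closed_def fps_X_power_mult_nth)
qed

lemma fps_nth_f_gf_g_gf: "f_gf k $ n = f_closed k $ n \<and> g_gf k $ n = g_closed k $ n"
proof (induction n arbitrary: k)
  case 0
  have "air_paths_up (Suc k') 0 = {}" "air_paths_down k 0 = {}" for k'
    by (auto simp: air_paths_up_def air_paths_down_def)
  then show ?case
    by (cases k) (simp_all add: fps_nth_f_gf fps_nth_g_gf air_paths_up_0 fps_nth_g_closed_0 f_closed_def)
next
  case (Suc n)
  have "f_gf k $ Suc n = f_closed k $ Suc n"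
  proof (cases k)
    case 0
    then show ?thesis by (simp add: fps_nth_f_gf air_paths_up_0 f_closed_def)
  next
    case (Suc k')
    then show ?thesis
      using Suc.IH[of k'] by (simp add: fps_nth_f_gf fps_nth_g_gf card_air_paths_up_Suc_Suc f_closed_Suc)
  qed
  moreover have "g_gf k $ Suc n = g_closed k $ Suc n"
    using Suc.IH by (simp add: fps_nth_f_gf fps_nth_g_gf card_air_paths_down_Suc[of n "n + 2"]
        fps_nth_g_closed_Suc[of n "n + 2"])
  ultimately show ?case ..
qed

theorem theorem1:
  shows "\<forall>k::nat. f_gf k = fps_X ^ k * s2 ^ k \<and>
                  g_gf k = fps_X ^ k * (s2 ^ (k + 1) - s2 ^ k) \<and>
                  all_gf k = f_gf k + g_gf k \<and>
                  f_gf k + g_gf k = fps_X ^ k * s2 ^ (k + 1)"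
proof
  fix k :: nat
  have "f_gf k = f_closed k" "g_gf k = g_closed k"
    using fps_nth_f_gf_g_gf by (auto intro: fps_ext)
  moreover have "all_gf k = f_gf k + g_gf k"
    by (rule fps_ext) (simp add: fps_nth_all_gf fps_nth_f_gf fps_nth_g_gf card_air_paths_at)
  ultimately show "f_gf k = fps_X ^ k * s2 ^ k \<and>
                  g_gf k = fps_X ^ k * (s2 ^ (k + 1) - s2 ^ k) \<and>
                  all_gf k = f_gf k + g_gf k \<and>
                  f_gf k + g_gf k = fps_X ^ k * s2 ^ (k + 1)"
    by (simp add: f_closed_def g_closed_def algebra_simps)
qed

end
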